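(* Let $p\colon X\to B$ be a Boolean set and let $G$ be an ultrafilter of $(X,\le)$. If $x,y\in X$ satisfy $x\sim y$ and $x\vee y\in G$, then $x\in G$ or $y\in G$.
   Context: Convention: a "Boolean algebra" means a generalized Boolean algebra (relatively complemented distributive lattice with $0$). Presheaf of sets over a meet semilattice $E$: pairwise disjoint sets $X_e$, restriction maps $x\mapsto x|^e_f$ for $e\ge f$ with $|^e_e=\mathrm{id}$ and $(x|^e_f)|^f_g=x|^e_g$; $p(x)=e$ iff $x\in X_e$; global support: all $X_e\neq\emptyset$. Order: $x\le y$ iff $p(x)\le p(y)$ and $x=y|^{p(y)}_{p(x)}$. Compatibility $x\sim y$: $x\wedge y$ exists and $p(x\wedge y)=p(x)\wedge p(y)$. A Boolean set is a presheaf $p\colon X\to B$ with global support over a Boolean algebra $B$ such that $(X,\le)$ has least element $0$, compatible pairs have joins, and $p(x)=0\Rightarrow x=0$. In a poset, a filter is a non-empty, down directed, upwardly closed subset; an ultrafilter is a maximal filter among those not equal to the whole poset. *)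

theory Defs
  imports Main
begin

definition gen_boolean_algebra :: "'b::{distrib_lattice,order_bot} itself \<Rightarrow> bool" where
  "gen_boolean_algebra _ \<longleftrightarrow>
     (\<forall>a b c::'b. a \<le> b \<and> b \<le> c \<longrightarrow> (\<exists>d. inf b d = a \<and> sup b d = c))"

text \<open>Presheaf of sets over the meet semilattice 'b: the set X is the type 'x,
  p x = e iff x \<in> X_e, and res x f = x|^{p x}_f for f \<le> p x.\<close>
definition presheaf :: "('x \<Rightarrow> 'b::semilattice_inf) \<Rightarrow> ('x \<Rightarrow> 'b \<Rightarrow> 'x) \<Rightarrow> bool" where
  "presheaf p res \<longleftrightarrow>
     (\<forall>x f. f \<le> p x \<longrightarrow> p (res x f) = f) \<and>
     (\<forall>x. res x (p x) = x) \<and>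
     (\<forall>x f g. g \<le> f \<and> f \<le> p x \<longrightarrow> res (res x f) g = res x g)"

definition global_support :: "('x \<Rightarrow> 'b) \<Rightarrow> bool" where
  "global_support p \<longleftrightarrow> (\<forall>e. \<exists>x. p x = e)"

definition psleq :: "('x \<Rightarrow> 'b::order) \<Rightarrow> ('x \<Rightarrow> 'b \<Rightarrow> 'x) \<Rightarrow> 'x \<Rightarrow> 'x \<Rightarrow> bool" where
  "psleq p res x y \<longleftrightarrow> p x \<le> p y \<and> x = res y (p x)"

definition is_meet :: "('x \<Rightarrow> 'x \<Rightarrow> bool) \<Rightarrow> 'x \<Rightarrow> 'x \<Rightarrow> 'x \<Rightarrow> bool" where
  "is_meet le x y m \<longleftrightarrow> le m x \<and> le m y \<and> (\<forall>z. le z x \<and> le z y \<longrightarrow> le z m)"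

definition is_join :: "('x \<Rightarrow> 'x \<Rightarrow> bool) \<Rightarrow> 'x \<Rightarrow> 'x \<Rightarrow> 'x \<Rightarrow> bool" where
  "is_join le x y j \<longleftrightarrow> le x j \<and> le y j \<and> (\<forall>z. le x z \<and> le y z \<longrightarrow> le j z)"

definition compatible :: "('x \<Rightarrow> 'b::semilattice_inf) \<Rightarrow> ('x \<Rightarrow> 'b \<Rightarrow> 'x) \<Rightarrow> 'x \<Rightarrow> 'x \<Rightarrow> bool" where
  "compatible p res x y \<longleftrightarrow>
     (\<exists>m. is_meet (psleq p res) x y m \<and> p m = inf (p x) (p y))"

definition boolean_set ::
  "('x \<Rightarrow> 'b::{distrib_lattice,order_bot}) \<Rightarrow> ('x \<Rightarrow> 'b \<Rightarrow> 'x) \<Rightarrow> bool" where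
  "boolean_set p res \<longleftrightarrow>
     gen_boolean_algebra TYPE('b) \<and> presheaf p res \<and> global_support p \<and>
     (\<exists>z. (\<forall>x. psleq p res z x) \<and> (\<forall>x. p x = bot \<longrightarrow> x = z)) \<and>
     (\<forall>x y. compatible p res x y \<longrightarrow> (\<exists>j. is_join (psleq p res) x y j))"

definition is_filter :: "('x \<Rightarrow> 'x \<Rightarrow> bool) \<Rightarrow> 'x set \<Rightarrow> bool" where
  "is_filter le F \<longleftrightarrow> F \<noteq> {} \<and>
     (\<forall>a\<in>F. \<forall>b\<in>F. \<exists>c\<in>F. le c a \<and> le c b) \<and>
     (\<forall>a\<in>F. \<forall>b. le a b \<longrightarrow> b \<in> F)"

definition is_ultrafilter :: "('x \<Rightarrow> 'x \<Rightarrow> bool) \<Rightarrow> 'x set \<Rightarrow> bool" where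
  "is_ultrafilter le F \<longleftrightarrow> is_filter le F \<and> F \<noteq> UNIV \<and>
     (\<forall>F'. is_filter le F' \<and> F' \<noteq> UNIV \<and> F \<subseteq> F' \<longrightarrow> F' = F)"

end

theory Submission
  imports Defs
begin

text \<open>Suppose neither \<open>x\<close> nor \<open>y\<close> lies in the ultrafilter \<open>G\<close>. For a section
  \<open>res j u\<close> of \<open>j \<in> G\<close> outside \<open>G\<close>, the restrictions of the members of \<open>G\<close> to \<open>u\<close>
  generate a filter strictly larger than \<open>G\<close>, which by maximality is everything and so
  contains the least element; hence some \<open>h \<in> G\<close> has support disjoint from \<open>u\<close>.
  Applying this to \<open>u = p x\<close> and \<open>u = p y\<close> and taking a common lower bound in \<open>G\<close> of the
  two witnesses and \<open>j\<close> gives an element of \<open>G\<close> whose support lies below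
  \<open>p j \<le> p x \<squnion> p y\<close> but is disjoint from both \<open>p x\<close> and \<open>p y\<close>, so it is the least
  element, which no proper filter contains.\<close>

lemma presheaf_p_res:
  "presheaf p res \<Longrightarrow> f \<le> p x \<Longrightarrow> p (res x f) = f"
  unfolding presheaf_def by blast

lemma presheaf_res_p:
  "presheaf p res \<Longrightarrow> res x (p x) = x"
  unfolding presheaf_def by blast

lemma presheaf_res_res:
  "presheaf p res \<Longrightarrow> g \<le> f \<Longrightarrow> f \<le> p x \<Longrightarrow> res (res x f) g = res x g"
  unfolding presheaf_def by blast

lemma psleq_p_mono: "psleq p res a b \<Longrightarrow> p a \<le> p b"
  unfolding psleq_def by blast

lemma psleq_refl: "presheaf p res \<Longrightarrow> psleq p res x x"
  unfolding psleq_def by (simp add: presheaf_res_p)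

lemma psleq_trans:
  assumes "presheaf p res" "psleq p res a b" "psleq p res b c"
  shows "psleq p res a c"
  using assms presheaf_res_res[OF assms(1), of "p a" "p b" c]
  unfolding psleq_def by auto

lemma psleq_res:
  "presheaf p res \<Longrightarrow> f \<le> p x \<Longrightarrow> psleq p res (res x f) x"
  unfolding psleq_def by (simp add: presheaf_p_res)

lemma psleq_res_inf_mono:
  fixes p :: "'x \<Rightarrow> 'b::semilattice_inf"
  assumes ps: "presheaf p res" and le: "psleq p res h h'"
  shows "psleq p res (res h (inf (p h) a)) (res h' (inf (p h') a))"
proof -
  have le_p: "p h \<le> p h'" and h: "res h' (p h) = h" using le unfolding psleq_def by auto
  have le_inf: "inf (p h) a \<le> inf (p h') a" using le_p by (rule inf_mono) simp
  have "res h (inf (p h) a) = res h' (inf (p h) a)"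
    using presheaf_res_res[OF ps _ le_p, of "inf (p h) a"] h by simp
  also have "\<dots> = res (res h' (inf (p h') a)) (inf (p h) a)"
    using presheaf_res_res[OF ps le_inf, of h'] by simp
  finally show ?thesis
    unfolding psleq_def using le_inf presheaf_p_res[OF ps, of "inf (p h) a" h]
      presheaf_p_res[OF ps, of "inf (p h') a" h'] by simp
qed

lemma p_join_le_sup:
  fixes p :: "'x \<Rightarrow> 'b::lattice"
  assumes ps: "presheaf p res" and j: "is_join (psleq p res) x y j"
  shows "p j \<le> sup (p x) (p y)"
proof -
  let ?k = "res j (sup (p x) (p y))"
  have xj: "psleq p res x j" and yj: "psleq p res y j"
    using j unfolding is_join_def by auto
  then have sup_le: "sup (p x) (p y) \<le> p j" by (simp add: psleq_p_mono)
  have pk: "p ?k = sup (p x) (p y)" by (rule presheaf_p_res[OF ps sup_le])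
  have "psleq p res x ?k" "psleq p res y ?k"
    using xj yj sup_le presheaf_res_res[OF ps] unfolding psleq_def pk by auto
  then have "psleq p res j ?k" using j unfolding is_join_def by blast
  then show ?thesis using pk psleq_p_mono by metis
qed

lemma boolean_set_least:
  assumes "boolean_set p res"
  obtains z where "\<And>w. psleq p res z w" and "\<And>w. p w = bot \<longleftrightarrow> w = z"
proof -
  obtain z where least: "\<And>w. psleq p res z w" and bot: "\<And>w. p w = bot \<Longrightarrow> w = z"
    using assms unfolding boolean_set_def by blast
  obtain w where "p w = bot"
    using assms unfolding boolean_set_def global_support_def by blast
  then have "p z = bot" using psleq_p_mono[OF least[of w]] by (simp add: bot_unique)
  then show thesis using that least bot by blast
qed

lemma filter_down_directed:
  "is_filter le F \<Longrightarrow> a \<in> F \<Longrightarrow> b \<in> F \<Longrightarrow> \<exists>c\<in>F. le c a \<and> le c b"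
  unfolding is_filter_def by blast

lemma filter_up_closed: "is_filter le F \<Longrightarrow> a \<in> F \<Longrightarrow> le a b \<Longrightarrow> b \<in> F"
  unfolding is_filter_def by blast

lemma least_notin_proper_filter:
  "is_filter le F \<Longrightarrow> F \<noteq> UNIV \<Longrightarrow> (\<And>w. le z w) \<Longrightarrow> z \<notin> F"
  using filter_up_closed by fastforce

lemma boolean_set_filter_support_ne_bot:
  assumes "boolean_set p res" "is_filter (psleq p res) G" "G \<noteq> UNIV" "h \<in> G"
  shows "p h \<noteq> bot"
proof
  assume "p h = bot"
  obtain z where "\<And>w. psleq p res z w" and "\<And>w. p w = bot \<longleftrightarrow> w = z"
    using boolean_set_least[OF assms(1)] by blast
  with \<open>p h = bot\<close> assms(2-4) show False using least_notin_proper_filter by metis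
qed

lemma le_sup_disjoint_eq_bot:
  fixes c :: "'a::{distrib_lattice,order_bot}"
  assumes "c \<le> sup a b" "inf c a = bot" "inf c b = bot"
  shows "c = bot"
proof -
  have "c = sup (inf c a) (inf c b)"
    using assms(1) by (simp add: inf_absorb1 flip: inf_sup_distrib1)
  with assms(2,3) show ?thesis by simp
qed

definition restrict_filter ::
  "('x \<Rightarrow> 'b::semilattice_inf) \<Rightarrow> ('x \<Rightarrow> 'b \<Rightarrow> 'x) \<Rightarrow> 'x set \<Rightarrow> 'b \<Rightarrow> 'x set" where
  "restrict_filter p res G u = {b. \<exists>h\<in>G. psleq p res (res h (inf (p h) u)) b}"

lemma is_filter_restrict_filter:
  assumes ps: "presheaf p res" and G: "is_filter (psleq p res) G"
  shows "is_filter (psleq p res) (restrict_filter p res G u)"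
  unfolding is_filter_def
proof (intro conjI ballI allI impI)
  show "restrict_filter p res G u \<noteq> {}"
    using G psleq_refl[OF ps] unfolding is_filter_def restrict_filter_def by blast
next
  fix a b assume "a \<in> restrict_filter p res G u" "b \<in> restrict_filter p res G u"
  then obtain h1 h2 where h: "h1 \<in> G" "h2 \<in> G"
    "psleq p res (res h1 (inf (p h1) u)) a" "psleq p res (res h2 (inf (p h2) u)) b"
    unfolding restrict_filter_def by blast
  then obtain h where "h \<in> G" "psleq p res h h1" "psleq p res h h2"
    using filter_down_directed[OF G] by blast
  then have "res h (inf (p h) u) \<in> restrict_filter p res G u"
    "psleq p res (res h (inf (p h) u)) a" "psleq p res (res h (inf (p h) u)) b"
    using h psleq_refl[OF ps] psleq_trans[OF ps] psleq_res_inf_mono[OF ps]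
    unfolding restrict_filter_def by blast+
  then show "\<exists>c\<in>restrict_filter p res G u. psleq p res c a \<and> psleq p res c b" by blast
next
  fix a b assume "a \<in> restrict_filter p res G u" "psleq p res a b"
  then show "b \<in> restrict_filter p res G u"
    using psleq_trans[OF ps] unfolding restrict_filter_def by blast
qed

lemma subset_restrict_filter:
  assumes ps: "presheaf p res"
  shows "G \<subseteq> restrict_filter p res G u"
proof
  fix h assume "h \<in> G"
  moreover have "psleq p res (res h (inf (p h) u)) h" by (rule psleq_res[OF ps]) simp
  ultimately show "h \<in> restrict_filter p res G u" unfolding restrict_filter_def by blast
qed

lemma res_in_restrict_filter:
  assumes ps: "presheaf p res" and "j \<in> G" "u \<le> p j"
  shows "res j u \<in> restrict_filter p res G u"
proof -
  have "res j (inf (p j) u) = res j u" using \<open>u \<le> p j\<close> by (simp add: inf_absorb2)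
  then show ?thesis
    using \<open>j \<in> G\<close> psleq_refl[OF ps] unfolding restrict_filter_def by force
qed

lemma ultrafilter_disjoint_support:
  assumes bs: "boolean_set p res" and G: "is_ultrafilter (psleq p res) G"
    and "j \<in> G" "u \<le> p j" "res j u \<notin> G"
  shows "\<exists>h\<in>G. inf (p h) u = bot"
proof -
  have ps: "presheaf p res" using bs unfolding boolean_set_def by blast
  obtain z where bot: "\<And>w. p w = bot \<longleftrightarrow> w = z"
    using boolean_set_least[OF bs] by blast
  let ?F = "restrict_filter p res G u"
  have max: "\<And>F. is_filter (psleq p res) F \<Longrightarrow> F \<noteq> UNIV \<Longrightarrow> G \<subseteq> F \<Longrightarrow> F = G"
    and G_filter: "is_filter (psleq p res) G" using G unfolding is_ultrafilter_def by blast+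
  have "is_filter (psleq p res) ?F" by (rule is_filter_restrict_filter[OF ps G_filter])
  moreover have "res j u \<in> ?F" using res_in_restrict_filter[OF ps assms(3,4)] .
  ultimately have "?F = UNIV"
    using max[of ?F] subset_restrict_filter[OF ps] \<open>res j u \<notin> G\<close> by blast
  then obtain h where "h \<in> G" "psleq p res (res h (inf (p h) u)) z"
    unfolding restrict_filter_def by blast
  moreover have "p (res h (inf (p h) u)) = inf (p h) u"
    using presheaf_p_res[OF ps] by simp
  ultimately have "inf (p h) u \<le> p z" using psleq_p_mono by metis
  also have "p z = bot" using bot by simp
  finally show ?thesis using \<open>h \<in> G\<close> bot_unique by blast
qed

theorem lemma3p7:
  fixes p :: "'x \<Rightarrow> 'b::{distrib_lattice,order_bot}"
    and res :: "'x \<Rightarrow> 'b \<Rightarrow> 'x"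
    and G :: "'x set"
  assumes "boolean_set p res"
    and "is_ultrafilter (psleq p res) G"
    and "compatible p res x y"
    and "is_join (psleq p res) x y j"
    and "j \<in> G"
  shows "x \<in> G \<or> y \<in> G"
proof (rule ccontr)
  assume neither: "\<not> ?thesis"
  have ps: "presheaf p res" using assms(1) unfolding boolean_set_def by blast
  have G: "is_filter (psleq p res) G" "G \<noteq> UNIV"
    using assms(2) unfolding is_ultrafilter_def by blast+
  have "psleq p res x j" "psleq p res y j" using assms(4) unfolding is_join_def by auto
  then have x: "res j (p x) \<notin> G" "p x \<le> p j" and y: "res j (p y) \<notin> G" "p y \<le> p j"
    using neither unfolding psleq_def by auto
  obtain h1 where h1: "h1 \<in> G" "inf (p h1) (p x) = bot"
    using ultrafilter_disjoint_support[OF assms(1,2,5) x(2,1)] by blast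
  obtain h2 where h2: "h2 \<in> G" "inf (p h2) (p y) = bot"
    using ultrafilter_disjoint_support[OF assms(1,2,5) y(2,1)] by blast
  obtain h3 where h3: "h3 \<in> G" "psleq p res h3 h1" "psleq p res h3 h2"
    using filter_down_directed[OF G(1) h1(1) h2(1)] by blast
  obtain h where h: "h \<in> G" "psleq p res h h3" "psleq p res h j"
    using filter_down_directed[OF G(1) h3(1) assms(5)] by blast
  have "p h \<le> p h1" "p h \<le> p h2"
    using psleq_trans[OF ps h(2) h3(2)] psleq_trans[OF ps h(2) h3(3)]
    by (simp_all add: psleq_p_mono)
  then have "inf (p h) (p x) \<le> inf (p h1) (p x)" "inf (p h) (p y) \<le> inf (p h2) (p y)"
    by (simp_all add: le_infI1)
  then have "inf (p h) (p x) = bot" "inf (p h) (p y) = bot"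
    using h1(2) h2(2) by (simp_all add: bot_unique)
  moreover have "p h \<le> sup (p x) (p y)"
    using psleq_p_mono[OF h(3)] p_join_le_sup[OF ps assms(4)] by (rule order_trans)
  ultimately have "p h = bot" by (simp add: le_sup_disjoint_eq_bot)
  then show False using boolean_set_filter_support_ne_bot[OF assms(1) G h(1)] by blast
qed

end
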